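(* (a) With $q_n=t_n-1$ and $r_n=t_n+\tfrac13$ for $n\ge0$ (i.e. $q_n\in\{-1,0\}$, $r_n\in\{\tfrac13,\tfrac43\}$ according as $t_n=0$ or $1$): $$5\sum_{n\ge1}\frac{q_{n-1}}{n^2}=-3\sum_{n\ge1}\frac{r_n}{n^2}.$$ (b) With $q_n=t_n-1$ and $r_n=t_n+\tfrac97$ for $n\ge0$: $$\sum_{n\ge1}\frac{9q_{n-1}+7r_n}{n^3}=8\zeta(3).$$ (c) With $q_n=t_n-\sqrt2$ and $r_n=t_n+\frac{17\sqrt2-2}{15}$ for $n\ge0$ (i.e. $q_n\in\{-\sqrt2,1-\sqrt2\}$, $r_n\in\{\frac{17\sqrt2-2}{15},\frac{17\sqrt2+13}{15}\}$): $$\sum_{n\ge1}\frac{17q_{n-1}+15r_n}{n^4}=16\,\eta(4).$$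
   Context: For $n\ge 0$, let $t_n\in\{0,1\}$ denote the sum of the binary digits of $n$ reduced modulo $2$ (so $t_0=0$; this is the Thue–Morse sequence). $\zeta(s)=\sum_{n\ge1}n^{-s}$ is the Riemann zeta function and $\eta(s)=\sum_{n\ge1}(-1)^{n-1}n^{-s}$ is the Dirichlet eta function. *)

theory Defs
  imports "HOL-Analysis.Analysis"
begin

fun thue_morse :: "nat \<Rightarrow> nat" where
  "thue_morse n = (if n = 0 then 0 else (n mod 2 + thue_morse (n div 2)) mod 2)"

definition tm :: "nat \<Rightarrow> real" where
  "tm n = real (thue_morse n)"

definition zeta_real :: "real \<Rightarrow> real" where
  "zeta_real s = (\<Sum>n. 1 / (real (Suc n)) powr s)"

definition eta_real :: "real \<Rightarrow> real" where
  "eta_real s = (\<Sum>n. (-1) ^ n / (real (Suc n)) powr s)"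

end

theory Submission
  imports Defs
begin

text \<open>Let \<open>A = \<Sum>\<^sub>n t(n-1) / n\<^sup>k\<close> and \<open>B = \<Sum>\<^sub>n t(n) / n\<^sup>k\<close>. Since \<open>t(2m) + t(2m+1) = 1\<close>, the
  coefficients \<open>t(n-1) + t(n) - 1\<close> vanish at odd \<open>n\<close>, while at \<open>n = 2m\<close> they equal
  \<open>t(m) - t(m-1)\<close>. Hence \<open>A + B - \<zeta>(k) = (B - A) / 2\<^sup>k\<close>, i.e.
  \<open>(2\<^sup>k + 1) A + (2\<^sup>k - 1) B = 2\<^sup>k \<zeta>(k)\<close>. The three identities are this relation for
  \<open>k = 2, 3, 4\<close>, the last one combined with \<open>\<eta>(4) = (1 - 2 / 2\<^sup>4) \<zeta>(4)\<close>, which follows from the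
  same even/odd splitting.\<close>

declare thue_morse.simps [simp del]

lemma thue_morse_0 [simp]: "thue_morse 0 = 0"
  by (subst thue_morse.simps) simp

lemma thue_morse_less_2: "thue_morse n < 2"
  by (subst thue_morse.simps) simp

lemma tm_0 [simp]: "tm 0 = 0"
  by (simp add: tm_def)

lemma tm_nonneg: "0 \<le> tm n" and tm_le_1: "tm n \<le> 1"
  using thue_morse_less_2[of n] by (auto simp: tm_def)

lemma tm_double [simp]: "tm (2 * m) = tm m"
  using thue_morse_less_2[of m] by (simp add: tm_def thue_morse.simps[of "2 * m"])

lemma tm_double_Suc [simp]: "tm (Suc (2 * m)) = 1 - tm m"
  using thue_morse_less_2[of m]
  by (auto simp: tm_def thue_morse.simps[of "Suc (2 * m)"] less_2_cases_iff)

text \<open>Dirichlet series are summed over all \<open>n \<ge> 0\<close>: the term at \<open>n = 0\<close> is \<open>w 0 / 0 = 0\<close>.\<close>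

lemma summable_bounded_div_power:
  fixes w :: "nat \<Rightarrow> real"
  assumes "k \<ge> 2" and "\<And>n. \<bar>w n\<bar> \<le> C"
  shows "summable (\<lambda>n. w n / real n ^ k)"
proof (rule summable_comparison_test')
  show "summable (\<lambda>n. C * inverse (real n ^ k))"
    using inverse_power_summable[OF \<open>k \<ge> 2\<close>] by (rule summable_mult)
  show "norm (w n / real n ^ k) \<le> C * inverse (real n ^ k)" for n
    using assms(2)[of n] by (simp add: abs_divide divide_right_mono field_simps)
qed

lemma suminf_shift_div_power:
  fixes w :: "nat \<Rightarrow> real"
  assumes "summable (\<lambda>n. w n / real n ^ k)" and "k \<ge> 1"
  shows "(\<Sum>n. w (Suc n) / real (Suc n) ^ k) = (\<Sum>n. w n / real n ^ k)"
  using suminf_split_head[OF assms(1)] \<open>k \<ge> 1\<close> by simp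

lemma suminf_even_supported_div_power:
  fixes w :: "nat \<Rightarrow> real"
  assumes "k \<ge> 2" and "\<And>n. \<bar>w n\<bar> \<le> C" and odd_0: "\<And>m. w (Suc (2 * m)) = 0"
  shows "(\<Sum>n. w n / real n ^ k) = (\<Sum>m. w (2 * m) / real m ^ k) / 2 ^ k"
proof -
  have "(\<Sum>n. w n / real n ^ k) = (\<Sum>m. w (2 * m) / real (2 * m) ^ k)"
  proof (rule suminf_mono_reindex[of "(*) 2", symmetric])
    show "strict_mono ((*) (2::nat))"
      by (simp add: strict_mono_def)
    show "w n / real n ^ k = 0" if "n \<notin> range ((*) 2)" for n
    proof -
      from that have "odd n" by (auto elim: evenE)
      then obtain m where "n = Suc (2 * m)" by (auto elim: oddE)
      then show ?thesis by (simp add: odd_0)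
    qed
  qed
  also have "\<dots> = (\<Sum>m. (w (2 * m) / real m ^ k) / 2 ^ k)"
    by (simp add: power_mult_distrib mult.commute)
  also have "\<dots> = (\<Sum>m. w (2 * m) / real m ^ k) / 2 ^ k"
    by (intro suminf_divide summable_bounded_div_power[OF \<open>k \<ge> 2\<close>, of _ C] assms(2))
  finally show ?thesis .
qed

lemma summable_tm_div_power:
  assumes "k \<ge> 2"
  shows "summable (\<lambda>n. tm (n - 1) / real n ^ k)" "summable (\<lambda>n. tm n / real n ^ k)"
    and "summable (\<lambda>n. 1 / real n ^ k)"
  by (rule summable_bounded_div_power[OF assms, of _ 1]; simp add: tm_nonneg tm_le_1)+

lemma thue_morse_dirichlet_relation:
  assumes "k \<ge> 2"
  shows "(2 ^ k + 1) * (\<Sum>n. tm (n - 1) / real n ^ k) + (2 ^ k - 1) * (\<Sum>n. tm n / real n ^ k)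
           = 2 ^ k * (\<Sum>n. 1 / real n ^ k)"
proof -
  define A B Z where "A = (\<Sum>n. tm (n - 1) / real n ^ k)" and "B = (\<Sum>n. tm n / real n ^ k)"
    and "Z = (\<Sum>n. 1 / real n ^ k)"
  note summable = summable_tm_div_power[OF assms]
  have "A + B - Z = (\<Sum>n. (tm (n - 1) + tm n - 1) / real n ^ k)"
    using suminf_add[OF summable(1,2)] suminf_diff[OF summable_add[OF summable(1,2)] summable(3)]
    by (simp add: A_def B_def Z_def add_divide_distrib diff_divide_distrib)
  also have "\<dots> = (\<Sum>m. (tm (2 * m - 1) + tm (2 * m) - 1) / real m ^ k) / 2 ^ k"
  proof (rule suminf_even_supported_div_power[OF assms, of _ 1])
    show "\<bar>tm (n - 1) + tm n - 1\<bar> \<le> 1" for n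
      using tm_nonneg[of n] tm_le_1[of n] tm_nonneg[of "n - 1"] tm_le_1[of "n - 1"] by simp
  qed simp
  also have "(\<Sum>m. (tm (2 * m - 1) + tm (2 * m) - 1) / real m ^ k)
               = (\<Sum>m. (tm m - tm (m - 1)) / real m ^ k)"
  proof (rule suminf_cong)
    show "(tm (2 * m - 1) + tm (2 * m) - 1) / real m ^ k = (tm m - tm (m - 1)) / real m ^ k" for m
    proof (cases m)
      case (Suc j)
      then have "2 * m - 1 = Suc (2 * j)" and "m - 1 = j" by simp_all
      then show ?thesis by simp
    qed (use assms in simp)
  qed
  also have "\<dots> = B - A"
    using suminf_diff[OF summable(2,1)] by (simp add: A_def B_def diff_divide_distrib)
  finally have "2 ^ k * (A + B - Z) = B - A"
    by simp
  then show ?thesis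
    unfolding A_def [symmetric] B_def [symmetric] Z_def [symmetric] by (simp add: algebra_simps)
qed

lemma alternating_dirichlet_relation:
  assumes "k \<ge> 2"
  shows "(\<Sum>n. - ((-1) ^ n) / real n ^ k) = (1 - 2 / 2 ^ k) * (\<Sum>n. 1 / real n ^ k)"
proof -
  define Z where "Z = (\<Sum>n. 1 / real n ^ k)"
  have bounded: "\<bar>1 + (-1) ^ n\<bar> \<le> (2::real)" for n
    by (cases "even n") simp_all
  have "(\<Sum>n. (1 + (-1) ^ n) / real n ^ k) = (\<Sum>m. (1 + (-1) ^ (2 * m)) / real m ^ k) / 2 ^ k"
    by (rule suminf_even_supported_div_power[OF assms bounded]) simp
  also have "(\<Sum>m. (1 + (-1) ^ (2 * m)) / real m ^ k) = 2 * Z"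
    using suminf_mult[OF summable_tm_div_power(3)[OF assms], of 2] by (simp add: Z_def)
  finally have even_part: "(\<Sum>n. (1 + (-1) ^ n) / real n ^ k) = 2 * Z / 2 ^ k" .
  have "(\<Sum>n. - ((-1) ^ n) / real n ^ k) = (\<Sum>n. 1 / real n ^ k - (1 + (-1) ^ n) / real n ^ k)"
    by (intro suminf_cong) (simp add: diff_divide_distrib [symmetric])
  also have "\<dots> = Z - 2 * Z / 2 ^ k"
  proof -
    have "summable (\<lambda>n. (1 + (-1) ^ n) / real n ^ k)"
      by (rule summable_bounded_div_power[OF assms bounded])
    from suminf_diff[OF summable_tm_div_power(3)[OF assms] this] show ?thesis
      by (simp add: Z_def even_part)
  qed
  finally show ?thesis
    by (simp add: Z_def algebra_simps)
qed

lemma suminf_tm_combination: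
  assumes "k \<ge> 2" and u: "\<And>n. u n = \<alpha> * tm n + \<beta> * tm (Suc n) + \<gamma>"
  shows "(\<Sum>n. u n / real (Suc n) ^ k) = \<alpha> * (\<Sum>n. tm (n - 1) / real n ^ k)
           + \<beta> * (\<Sum>n. tm n / real n ^ k) + \<gamma> * (\<Sum>n. 1 / real n ^ k)"
proof -
  define w where "w n = \<alpha> * tm (n - 1) + \<beta> * tm n + \<gamma>" for n
  note summable = summable_tm_div_power[OF assms(1)]
  have tm_scaled: "\<bar>c * tm m\<bar> \<le> \<bar>c\<bar>" for c m
    using tm_nonneg[of m] tm_le_1[of m] by (simp add: abs_mult mult_left_le)
  have "\<bar>w n\<bar> \<le> \<bar>\<alpha>\<bar> + \<bar>\<beta>\<bar> + \<bar>\<gamma>\<bar>" for n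
    using tm_scaled[of \<alpha> "n - 1"] tm_scaled[of \<beta> n] unfolding w_def by linarith
  then have "summable (\<lambda>n. w n / real n ^ k)"
    by (rule summable_bounded_div_power[OF assms(1)])
  then have "(\<Sum>n. w (Suc n) / real (Suc n) ^ k) = (\<Sum>n. w n / real n ^ k)"
    by (rule suminf_shift_div_power) (use assms(1) in simp)
  also have "\<dots> = (\<Sum>n. \<alpha> * (tm (n - 1) / real n ^ k) + \<beta> * (tm n / real n ^ k)
                        + \<gamma> * (1 / real n ^ k))"
    by (simp add: w_def add_divide_distrib)
  also have "\<dots> = \<alpha> * (\<Sum>n. tm (n - 1) / real n ^ k) + \<beta> * (\<Sum>n. tm n / real n ^ k)
                     + \<gamma> * (\<Sum>n. 1 / real n ^ k)"
    using summable
    by (simp only: suminf_add [symmetric] summable_add summable_mult suminf_mult)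
  finally show ?thesis
    by (simp add: w_def u)
qed

theorem proposition5:
  shows "(5 * (\<Sum>n. (tm n - 1) / real (Suc n) ^ 2)
            = -3 * (\<Sum>n. (tm (Suc n) + 1/3) / real (Suc n) ^ 2))
       \<and> ((\<Sum>n. (9 * (tm n - 1) + 7 * (tm (Suc n) + 9/7)) / real (Suc n) ^ 3)
            = 8 * zeta_real 3)
       \<and> ((\<Sum>n. (17 * (tm n - sqrt 2) + 15 * (tm (Suc n) + (17 * sqrt 2 - 2) / 15))
                  / real (Suc n) ^ 4)
            = 16 * eta_real 4)"
proof -
  define A B Z where "A k = (\<Sum>n. tm (n - 1) / real n ^ k)" and "B k = (\<Sum>n. tm n / real n ^ k)"
    and "Z k = (\<Sum>n. 1 / real n ^ k)" for k :: nat
  note combination = suminf_tm_combination[folded A_def B_def Z_def]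
  have relation: "(2 ^ k + 1) * A k + (2 ^ k - 1) * B k = 2 ^ k * Z k" if "k \<ge> 2" for k
    using thue_morse_dirichlet_relation[OF that] by (simp add: A_def B_def Z_def)
  have zeta_3: "zeta_real 3 = Z 3"
    using suminf_shift_div_power[OF summable_tm_div_power(3), of 3]
    by (simp add: zeta_real_def Z_def powr_realpow)
  have "eta_real 4 = (\<Sum>n. - ((-1) ^ Suc n) / real (Suc n) ^ 4)"
    by (simp add: eta_real_def powr_realpow)
  also have "\<dots> = (1 - 2 / 2 ^ 4) * Z 4"
    using suminf_shift_div_power[OF summable_bounded_div_power[of 4 "\<lambda>n. - ((-1) ^ n)" 1]]
      alternating_dirichlet_relation[of 4] by (simp add: Z_def)
  finally have eta_4: "eta_real 4 = 7 / 8 * Z 4"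
    by simp
  have "(\<Sum>n. (tm n - 1) / real (Suc n) ^ 2) = A 2 - Z 2"
    by (subst combination[where \<alpha> = 1 and \<beta> = 0 and \<gamma> = "-1"]) simp_all
  moreover have "(\<Sum>n. (tm (Suc n) + 1/3) / real (Suc n) ^ 2) = B 2 + Z 2 / 3"
    by (subst combination[where \<alpha> = 0 and \<beta> = 1 and \<gamma> = "1/3"]) simp_all
  moreover have "(\<Sum>n. (9 * (tm n - 1) + 7 * (tm (Suc n) + 9/7)) / real (Suc n) ^ 3)
                   = 9 * A 3 + 7 * B 3"
    by (subst combination[where \<alpha> = 9 and \<beta> = 7 and \<gamma> = 0]) (simp_all add: algebra_simps)
  moreover have "(\<Sum>n. (17 * (tm n - sqrt 2) + 15 * (tm (Suc n) + (17 * sqrt 2 - 2) / 15))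
                   / real (Suc n) ^ 4) = 17 * A 4 + 15 * B 4 - 2 * Z 4"
    by (subst combination[where \<alpha> = 17 and \<beta> = 15 and \<gamma> = "-2"]) (simp_all add: field_simps)
  ultimately show ?thesis
    using relation[of 2] relation[of 3] relation[of 4] zeta_3 eta_4 by simp
qed

end
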